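(* For any $n$ and $k$ with $k=o(\sqrt n)$, there exists a binary $k$-batch code of dimension $n$ with redundancy $\mathcal{O}(n^{2/3}k^{5/3})$. In particular, for $0<\epsilon<1/2$, $r_B(n,n^\epsilon)=\mathcal{O}(n^{2/3+5\epsilon/3})$.
   Context: A binary linear code of length $N$ encoding $n$ information bits $x_1,\dots,x_n$ is a $k$-batch code if for every multiset $\{i_1,\dots,i_k\}$ of indices there exist $k$ mutually disjoint sets $R_1,\dots,R_k$ of coordinates such that $x_{i_j}$ is a function of the codeword bits indexed by $R_j$. Its redundancy is $N-n$; $r_B(n,k)$ is the minimum redundancy of a binary $k$-batch code of dimension $n$. *)

theory Defs
  imports Complex_Main "HOL-Library.Landau_Symbols"
begin

text \<open>A binary linear code of length N and dimension n is given by its generator: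
  codeword bit m (for m < N) is the GF(2)-sum (XOR) of the information bits x i, i in G m,
  where G m is a subset of {..<n}.  Every GF(2)-linear map from GF(2)^n to GF(2)^N has this form.\<close>

definition encode :: "(nat \<Rightarrow> nat set) \<Rightarrow> (nat \<Rightarrow> bool) \<Rightarrow> nat \<Rightarrow> bool" where
  "encode G x m = odd (card {i \<in> G m. x i})"

definition linear_code :: "nat \<Rightarrow> nat \<Rightarrow> (nat \<Rightarrow> nat set) \<Rightarrow> bool" where
  "linear_code n N G \<longleftrightarrow> (\<forall>m<N. G m \<subseteq> {..<n})"

definition recoverable_from ::
    "nat \<Rightarrow> (nat \<Rightarrow> nat set) \<Rightarrow> nat set \<Rightarrow> nat \<Rightarrow> bool" where
  "recoverable_from n G R i \<longleftrightarrow>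
     (\<exists>g :: (nat \<Rightarrow> bool) \<Rightarrow> bool. \<forall>x :: nat \<Rightarrow> bool.
        (\<forall>j. j \<ge> n \<longrightarrow> \<not> x j) \<longrightarrow>
        x i = g (\<lambda>m. if m \<in> R then encode G x m else False))"

text \<open>k-batch code: for every multiset of k indices (given as a list idx 0, ..., idx (k-1)
  of indices below n, repetitions allowed) there are k mutually disjoint sets of coordinates
  R 0, ..., R (k-1) such that x (idx j) is a function of the bits indexed by R j.\<close>
definition batch_code :: "nat \<Rightarrow> nat \<Rightarrow> nat \<Rightarrow> (nat \<Rightarrow> nat set) \<Rightarrow> bool" where
  "batch_code n N k G \<longleftrightarrow> linear_code n N G \<and>
     (\<forall>idx :: nat \<Rightarrow> nat. (\<forall>j<k. idx j < n) \<longrightarrow>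
        (\<exists>R :: nat \<Rightarrow> nat set.
           (\<forall>j<k. R j \<subseteq> {..<N}) \<and>
           (\<forall>j<k. \<forall>j'<k. j \<noteq> j' \<longrightarrow> R j \<inter> R j' = {}) \<and>
           (\<forall>j<k. recoverable_from n G (R j) (idx j))))"

definition r_B :: "nat \<Rightarrow> nat \<Rightarrow> nat" where
  "r_B n k = (LEAST r. \<exists>G. batch_code n (n + r) k G)"

end

theory Submission
  imports Defs "HOL-Computational_Algebra.Primes" "HOL-Real_Asymp.Real_Asymp"
begin

text \<open>Arrange the information bits in blocks of \<open>p\<^sup>3\<close> points of \<open>\<bbbF>\<^sub>p\<^sup>3\<close> (\<open>p\<close> prime) and add one parity
  bit for every line \<open>{(x, a + t x, b + t\<^sup>2 x)}\<close> with slope \<open>t < k \<le> p\<close>.  Two such lines of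
  different slopes meet in at most one point, and if a point \<open>i\<close> is not on a line \<open>l\<close>, at most
  one of the lines through \<open>i\<close> meets \<open>l\<close>.  Hence for any \<open>k\<close> requested points the slopes can be
  chosen greedily so that the chosen lines pairwise meet only in requested points, and each
  request is served by the parity bit of its line together with the other points on that line.
  The redundancy is \<open>k p\<^sup>2\<close> per block, about \<open>k n / p + k p\<^sup>2\<close> in total, which is
  \<open>O(n\<^bsup>2/3\<^esup> k\<^bsup>5/3\<^esup>)\<close> for a prime \<open>p\<close> within a constant factor of \<open>max k (n / k\<^sup>2)\<^bsup>1/3\<^esup>\<close> when
  \<open>k\<^sup>2 \<le> n\<close>.  Such primes exist by a weak Bertrand postulate, proved with Erdos' bounds on the
  central binomial coefficient.\<close>

section \<open>A weak Bertrand postulate\<close>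

lemma multiplicity_less_self_nat:
  fixes p m :: nat
  assumes "prime p" "m > 0"
  shows "multiplicity p m < m"
proof -
  have "p ^ multiplicity p m \<le> m"
    using assms(2) by (simp add: dvd_imp_le multiplicity_dvd)
  moreover have "multiplicity p m < 2 ^ multiplicity p m" by (rule less_exp)
  moreover have "(2::nat) ^ multiplicity p m \<le> p ^ multiplicity p m"
    using prime_ge_2_nat[OF assms(1)] by (simp add: power_mono)
  ultimately show ?thesis by linarith
qed

lemma div_prime_power_eq_0:
  fixes p n i :: nat
  assumes "prime p" "n < i"
  shows "n div p ^ i = 0"
proof -
  have "n < 2 ^ i" using assms(2) less_exp[of i] by linarith
  also have "(2::nat) ^ i \<le> p ^ i" using prime_ge_2_nat[OF assms(1)] by (simp add: power_mono)
  finally show ?thesis by simp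
qed

lemma card_filter_eq_sum:
  "finite A \<Longrightarrow> card {i\<in>A. P i} = (\<Sum>i\<in>A. if P i then 1 else (0::nat))"
  by (simp add: sum.inter_filter[symmetric])

lemma legendre_formula:
  fixes p :: nat
  assumes p: "prime p"
  shows "multiplicity p (fact n) = (\<Sum>i\<in>{1..n}. n div p ^ i)"
proof (induction n)
  case 0
  then show ?case by simp
next
  case (Suc n)
  define M where "M = multiplicity p (Suc n)"
  have "multiplicity p (Suc n * fact n :: nat) = M + multiplicity p (fact n)"
    unfolding M_def using p by (intro prime_elem_multiplicity_mult_distrib) auto
  hence fact_Suc: "multiplicity p (fact (Suc n) :: nat) = M + multiplicity p (fact n)"
    by (simp only: fact_Suc of_nat_id)
  have div_Suc: "Suc n div q = n div q + (if q dvd Suc n then 1 else 0)" if "q > 0" for q :: nat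
    using div_Suc[of n q] that by (auto simp: dvd_eq_mod_eq_0)
  have "\<not> is_unit p" using prime_ge_2_nat[OF p] by simp
  hence dvd_iff: "p ^ i dvd Suc n \<longleftrightarrow> i \<le> M" for i
    unfolding M_def using power_dvd_iff_le_multiplicity[of "Suc n" p i] by simp
  have "M < Suc n" unfolding M_def by (rule multiplicity_less_self_nat[OF p]) simp
  hence "{i\<in>{1..Suc n}. p ^ i dvd Suc n} = {1..M}"
    by (intro set_eqI) (use dvd_iff in auto)
  hence count: "(\<Sum>i\<in>{1..Suc n}. if p ^ i dvd Suc n then 1 else 0) = M"
    by (simp only: card_filter_eq_sum[symmetric] finite_atLeastAtMost card_atLeastAtMost)
  have "(\<Sum>i\<in>{1..Suc n}. Suc n div p ^ i) =
        (\<Sum>i\<in>{1..Suc n}. n div p ^ i + (if p ^ i dvd Suc n then 1 else 0))"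
    by (rule sum.cong) (use prime_gt_0_nat[OF p] div_Suc in auto)
  also have "\<dots> = (\<Sum>i\<in>{1..Suc n}. n div p ^ i) + M"
    by (simp only: sum.distrib count)
  also have "(\<Sum>i\<in>{1..Suc n}. n div p ^ i) = (\<Sum>i\<in>{1..n}. n div p ^ i)"
    using div_prime_power_eq_0[OF p, of n "Suc n"] by (simp add: sum.cl_ivl_Suc)
  finally show ?case using fact_Suc Suc.IH by linarith
qed

lemma prime_power_multiplicity_central_binomial_le:
  fixes p N :: nat
  assumes p: "prime p" and "N > 0"
  shows "p ^ multiplicity p ((2*N) choose N) \<le> 2*N"
proof -
  have p2: "p \<ge> 2" using prime_ge_2_nat[OF p] .
  define v where "v = multiplicity p ((2*N) choose N)"
  define T where "T = {i\<in>{1..2*N}. p ^ i \<le> 2*N}"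
  have "fact N * fact N * ((2*N) choose N) = (fact (2*N) :: nat)"
    using binomial_fact_lemma[of N "2*N"] by (simp add: mult_2)
  moreover have "multiplicity p (fact N * fact N * ((2*N) choose N)) =
      multiplicity p (fact N :: nat) + multiplicity p (fact N :: nat) + v"
    unfolding v_def using p
    by (subst prime_elem_multiplicity_mult_distrib, simp, simp, simp,
        subst prime_elem_multiplicity_mult_distrib, simp_all)
  ultimately have legendre:
    "(\<Sum>i\<in>{1..2*N}. (2*N) div p ^ i) = 2 * (\<Sum>i\<in>{1..N}. N div p ^ i) + v"
    by (simp only: legendre_formula[OF p] mult_2)
  have "(\<Sum>i\<in>{1..N}. N div p ^ i) = (\<Sum>i\<in>{1..2*N}. N div p ^ i)"
    by (rule sum.mono_neutral_left) (auto intro!: div_prime_power_eq_0[OF p])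
  \<comment> \<open>each term \<open>\<lfloor>2N/p\<^sup>i\<rfloor> - 2\<lfloor>N/p\<^sup>i\<rfloor>\<close> is \<open>0\<close> or \<open>1\<close>, and \<open>0\<close> once \<open>p\<^sup>i > 2N\<close>\<close>
  moreover have "(2*N) div q \<le> 2 * (N div q) + (if q \<le> 2*N then 1 else 0)" if "q > 0" for q
  proof -
    have "N < N div q * q + q"
      using div_mult_mod_eq[of N q] mod_less_divisor[OF that, of N] by linarith
    hence "2*N < (2 * (N div q) + 2) * q" by (simp add: algebra_simps)
    hence "(2*N) div q < 2 * (N div q) + 2" by (rule less_mult_imp_div_less)
    thus ?thesis by simp
  qed
  hence "(\<Sum>i\<in>{1..2*N}. (2*N) div p ^ i) \<le>
         (\<Sum>i\<in>{1..2*N}. 2 * (N div p ^ i) + (if p ^ i \<le> 2*N then 1 else 0))"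
    using p2 by (intro sum_mono) simp
  moreover have "\<dots> = 2 * (\<Sum>i\<in>{1..2*N}. N div p ^ i) + card T"
    unfolding T_def by (simp only: card_filter_eq_sum finite_atLeastAtMost sum.distrib sum_distrib_left)
  ultimately have "v \<le> card T" using legendre by linarith
  moreover have "p ^ card T \<le> 2*N"
  proof (cases "T = {}")
    case True thus ?thesis using \<open>N > 0\<close> by simp
  next
    case False
    have "finite T" unfolding T_def by simp
    hence "Max T \<in> T" using False by (rule Max_in)
    hence "p ^ Max T \<le> 2*N" unfolding T_def by simp
    have "T \<subseteq> {1..Max T}" using \<open>finite T\<close> by (auto simp: T_def)
    hence "card T \<le> Max T" using card_mono[of "{1..Max T}" T] by simp
    hence "p ^ card T \<le> p ^ Max T" using p2 by (intro power_increasing) simp_all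
    thus ?thesis using \<open>p ^ Max T \<le> 2*N\<close> by simp
  qed
  moreover have "p ^ v \<le> p ^ card T" if "v \<le> card T"
    using that p2 by (intro power_increasing) simp_all
  ultimately show ?thesis unfolding v_def by simp
qed

lemma prod_le_of_subset_prime_factors:
  fixes C :: nat
  assumes "C > 0" "B \<subseteq> prime_factors C"
  shows "\<Prod>B \<le> C"
proof -
  have fin: "finite (prime_factors C)" by simp
  have "\<Prod>B \<le> (\<Prod>p\<in>B. p ^ multiplicity p C)"
  proof (rule prod_mono)
    fix p assume "p \<in> B"
    hence "p \<in> prime_factors C" using assms by auto
    hence "prime p" "p dvd C" by (auto simp: in_prime_factors_iff)
    hence "multiplicity p C \<ge> 1" using assms(1) prime_multiplicity_gt_zero_iff[of p C] by simp
    hence "p ^ 1 \<le> p ^ multiplicity p C" using prime_ge_2_nat[OF \<open>prime p\<close>] by (intro power_increasing) auto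
    thus "0 \<le> p \<and> p \<le> p ^ multiplicity p C" by simp
  qed
  also have "\<dots> \<le> (\<Prod>p\<in>prime_factors C. p ^ multiplicity p C)"
  proof (rule dvd_imp_le)
    show "(\<Prod>p\<in>B. p ^ multiplicity p C) dvd (\<Prod>p\<in>prime_factors C. p ^ multiplicity p C)"
      by (rule prod_dvd_prod_subset[OF fin assms(2)])
    show "0 < (\<Prod>p\<in>prime_factors C. p ^ multiplicity p C)"
      by (rule prod_pos) (auto simp: in_prime_factors_iff prime_gt_0_nat)
  qed
  also have "\<dots> = C" using prod_prime_factors[of C] assms(1) by simp
  finally show ?thesis .
qed

lemma binomial_odd_middle_le: "(2*m+1) choose m \<le> 4 ^ m"
proof -
  have "((2*m+1) choose m) + ((2*m+1) choose (m+1)) \<le> (\<Sum>k\<in>{m, m+1}. (2*m+1) choose k)"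
    by simp
  also have "\<dots> \<le> (\<Sum>k\<le>2*m+1. (2*m+1) choose k)"
    by (rule sum_mono2) auto
  also have "\<dots> = 2 ^ (2*m+1)" by (rule choose_row_sum)
  finally have "2 * ((2*m+1) choose m) \<le> 2 * 4 ^ m"
    using binomial_symmetric[of m "2*m+1"] by (simp add: power_mult power_add)
  thus ?thesis by simp
qed

lemma prod_primes_between_le_binomial: "\<Prod>{p::nat. prime p \<and> m+1 < p \<and> p \<le> 2*m+1} \<le> (2*m+1) choose m"
proof (rule prod_le_of_subset_prime_factors)
  show "0 < (2*m+1) choose m" by simp
  show "{p::nat. prime p \<and> m+1 < p \<and> p \<le> 2*m+1} \<subseteq> prime_factors ((2*m+1) choose m)"
  proof
    fix p assume "p \<in> {p::nat. prime p \<and> m+1 < p \<and> p \<le> 2*m+1}"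
    hence p: "prime p" "m+1 < p" "p \<le> 2*m+1" by auto
    have fe: "fact m * fact (m+1) * ((2*m+1) choose m) = (fact (2*m+1) :: nat)"
      using binomial_fact_lemma[of m "2*m+1"] by (simp add: Suc_diff_le)
    have "p dvd fact (2*m+1)" using p prime_dvd_fact_iff by blast
    hence "p dvd fact m * fact (m+1) * ((2*m+1) choose m)" using fe by simp
    moreover have "\<not> p dvd fact m" using p prime_dvd_fact_iff[of p m] by simp
    moreover have "\<not> p dvd fact (m+1)" using p prime_dvd_fact_iff[of p "m+1"] by simp
    ultimately have "p dvd (2*m+1) choose m" using p(1) by (simp add: prime_dvd_mult_iff)
    thus "p \<in> prime_factors ((2*m+1) choose m)" using p(1) by (intro prime_factorsI) auto
  qed
qed

lemma prod_primes_le_four_power: "\<Prod>{p::nat. prime p \<and> p \<le> x} \<le> 4 ^ x"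
proof (induction x rule: less_induct)
  case (less x)
  consider "x \<le> 1" | "x = 2" | "x > 2" "even x" | "x > 2" "odd x" by linarith
  then show ?case
  proof cases
    case 1
    have "\<not> (prime p \<and> p \<le> x)" for p using prime_ge_2_nat[of p] 1 by auto
    hence e: "{p::nat. prime p \<and> p \<le> x} = {}" by blast
    show ?thesis unfolding e by simp
  next
    case 2
    have "prime p \<and> p \<le> x \<longleftrightarrow> p = 2" for p using prime_ge_2_nat[of p] 2 by auto
    hence e: "{p::nat. prime p \<and> p \<le> x} = {2}" by blast
    show ?thesis unfolding e using 2 by simp
  next
    case 3
    have "\<not> prime x" using 3 prime_odd_nat by blast
    have "prime p \<and> p \<le> x \<longleftrightarrow> prime p \<and> p \<le> x - 1" for p
      using \<open>\<not> prime x\<close> by (cases "p = x") auto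
    hence "{p::nat. prime p \<and> p \<le> x} = {p. prime p \<and> p \<le> x - 1}" by blast
    hence "\<Prod>{p::nat. prime p \<and> p \<le> x} \<le> 4 ^ (x - 1)" using less.IH[of "x - 1"] 3 by simp
    also have "\<dots> \<le> 4 ^ x" by (rule power_increasing) auto
    finally show ?thesis .
  next
    case 4
    from 4(2) obtain m where "x = 2*m+1" by (rule oddE)
    with 4(1) have m: "x = 2*m+1" "m \<ge> 1" by auto
    have un: "{p::nat. prime p \<and> p \<le> x} = {p. prime p \<and> p \<le> m+1} \<union> {p. prime p \<and> m+1 < p \<and> p \<le> 2*m+1}"
      using m by auto
    have "\<Prod>{p::nat. prime p \<and> p \<le> x} =
        \<Prod>{p. prime p \<and> p \<le> m+1} * \<Prod>{p. prime p \<and> m+1 < p \<and> p \<le> 2*m+1}"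
      unfolding un by (rule prod.union_disjoint) auto
    also have "\<dots> \<le> 4 ^ (m+1) * 4 ^ m"
    proof (rule mult_le_mono)
      show "\<Prod>{p. prime p \<and> p \<le> m+1} \<le> 4 ^ (m+1)" using less.IH[of "m+1"] m by simp
      show "\<Prod>{p. prime p \<and> m+1 < p \<and> p \<le> 2*m+1} \<le> 4 ^ m"
        using prod_primes_between_le_binomial[of m] binomial_odd_middle_le[of m] by linarith
    qed
    also have "\<dots> = 4 ^ x" using m by (simp add: power_add[symmetric])
    finally show ?thesis .
  qed
qed

lemma card_le_sqrt_if_squares_le:
  fixes S :: "nat set"
  assumes "\<And>p. p \<in> S \<Longrightarrow> p * p \<le> m"
  shows "real (card S) \<le> sqrt (real m) + 1"
proof -
  have "S \<subseteq> {..nat \<lfloor>sqrt (real m)\<rfloor>}"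
  proof
    fix p assume "p \<in> S"
    hence "real (p * p) \<le> real m" using assms by (simp only: of_nat_le_iff)
    hence "(real p)\<^sup>2 \<le> real m" by (simp add: power2_eq_square)
    hence "real p \<le> sqrt (real m)" by (rule real_le_rsqrt)
    thus "p \<in> {..nat \<lfloor>sqrt (real m)\<rfloor>}" by (simp add: le_nat_floor)
  qed
  hence "card S \<le> nat \<lfloor>sqrt (real m)\<rfloor> + 1"
    using card_mono[of "{..nat \<lfloor>sqrt (real m)\<rfloor>}" S] by simp
  moreover have "real (nat \<lfloor>sqrt (real m)\<rfloor>) \<le> sqrt (real m)" by simp
  ultimately show ?thesis by linarith
qed

text \<open>Erdos: without primes in \<open>(x, 4x]\<close>, every prime factor of \<open>(4x choose 2x)\<close> is at most
  \<open>x\<close>; those above \<open>\<surd>(4x)\<close> occur at most once, and each prime power factor is at most \<open>4x\<close>.\<close>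
lemma central_binomial_le_if_no_prime_between:
  fixes x :: nat
  assumes x: "x \<ge> 1" and no_prime: "\<nexists>p. prime p \<and> x < p \<and> p \<le> 4*x"
  shows "real ((2*(2*x)) choose (2*x)) \<le> (4 * real x) powr (2 * sqrt x + 1) * 4 ^ x"
proof -
  define C where "C = (2*(2*x)) choose (2*x)"
  have C_pos: "C > 0" unfolding C_def by simp
  have power_le: "p ^ multiplicity p C \<le> 4*x" if "p \<in> prime_factors C" for p
  proof -
    have "prime p" using that by (auto simp: in_prime_factors_iff)
    from prime_power_multiplicity_central_binomial_le[OF this, of "2*x"] x
    show ?thesis unfolding C_def by simp
  qed
  have factor_le: "prime p \<and> p \<le> x" if "p \<in> prime_factors C" for p
  proof -
    have "fact (2*x) * fact (2*(2*x) - 2*x) * C = (fact (2*(2*x)) :: nat)"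
      unfolding C_def by (rule binomial_fact_lemma) simp
    hence "fact (4*x) = C * (fact (2*x) * fact (2*(2*x) - 2*x) :: nat)" by (simp add: algebra_simps)
    hence "C dvd fact (4*x)" by (rule dvdI)
    moreover have "prime p" "p dvd C" using that by (auto simp: in_prime_factors_iff)
    ultimately have "p \<le> 4*x" using prime_dvd_fact_iff dvd_trans by blast
    hence "p \<le> x" using no_prime \<open>prime p\<close> not_le by blast
    thus ?thesis using \<open>prime p\<close> by simp
  qed
  define S1 where "S1 = {p\<in>prime_factors C. p*p \<le> 4*x}"
  define S2 where "S2 = {p\<in>prime_factors C. \<not> p*p \<le> 4*x}"
  have fin: "finite S1" "finite S2" unfolding S1_def S2_def by simp_all
  have split: "prime_factors C = S1 \<union> S2" unfolding S1_def S2_def by auto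
  have "C = (\<Prod>p\<in>prime_factors C. p ^ multiplicity p C)"
    using prod_prime_factors[of C] C_pos by simp
  also have "\<dots> = (\<Prod>p\<in>S1. p ^ multiplicity p C) * (\<Prod>p\<in>S2. p ^ multiplicity p C)"
    unfolding split by (rule prod.union_disjoint) (use fin in \<open>auto simp: S1_def S2_def\<close>)
  also have "(\<Prod>p\<in>S1. p ^ multiplicity p C) \<le> (\<Prod>p\<in>S1. 4*x)"
    by (rule prod_mono) (use power_le in \<open>auto simp: S1_def\<close>)
  also have "(\<Prod>p\<in>S2. p ^ multiplicity p C) \<le> (\<Prod>p\<in>S2. p)"
  proof (rule prod_mono)
    fix p assume "p \<in> S2"
    hence pf: "p \<in> prime_factors C" and big: "4*x < p*p" unfolding S2_def by auto
    have p2: "p \<ge> 2" using pf prime_ge_2_nat by (auto simp: in_prime_factors_iff)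
    have "multiplicity p C \<le> 1"
    proof (rule ccontr)
      assume "\<not> multiplicity p C \<le> 1"
      hence "p ^ 2 \<le> p ^ multiplicity p C" using p2 by (intro power_increasing) auto
      with power_le[OF pf] big show False by (simp add: power2_eq_square)
    qed
    hence "p ^ multiplicity p C \<le> p ^ 1" using p2 by (intro power_increasing) auto
    thus "0 \<le> p ^ multiplicity p C \<and> p ^ multiplicity p C \<le> p" by simp
  qed
  also have "(\<Prod>p\<in>S2. p) \<le> \<Prod>{p::nat. prime p \<and> p \<le> x}"
  proof (rule dvd_imp_le)
    have "S2 \<subseteq> {p::nat. prime p \<and> p \<le> x}" using factor_le unfolding S2_def by auto
    thus "(\<Prod>p\<in>S2. p) dvd \<Prod>{p::nat. prime p \<and> p \<le> x}"
      by (rule prod_dvd_prod_subset[rotated]) simp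
    show "0 < \<Prod>{p::nat. prime p \<and> p \<le> x}"
      by (rule prod_pos) (auto simp: prime_gt_0_nat)
  qed
  also have "\<dots> \<le> 4 ^ x" by (rule prod_primes_le_four_power)
  finally have "C \<le> (4*x) ^ card S1 * 4 ^ x" by simp
  hence "real C \<le> real ((4*x) ^ card S1 * 4 ^ x)" by (simp only: of_nat_le_iff)
  hence "real C \<le> (4 * real x) ^ card S1 * 4 ^ x" by simp
  also have "(4 * real x) ^ card S1 = (4 * real x) powr real (card S1)"
    using x by (simp add: powr_realpow)
  also have "\<dots> \<le> (4 * real x) powr (2 * sqrt x + 1)"
  proof (rule powr_mono)
    have "real (card S1) \<le> sqrt (real (4*x)) + 1"
      by (rule card_le_sqrt_if_squares_le) (simp add: S1_def)
    also have "sqrt (real (4*x)) = 2 * sqrt x" by (simp add: real_sqrt_mult)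
    finally show "real (card S1) \<le> 2 * sqrt x + 1" .
  qed (use x in simp)
  finally have "real C \<le> (4 * real x) powr (2 * sqrt x + 1) * 4 ^ x" by simp
  thus ?thesis unfolding C_def .
qed

lemma eventually_prime_between: "\<forall>\<^sub>F x in sequentially. \<exists>p. prime p \<and> x < p \<and> p \<le> 4*x"
proof -
  have "\<forall>\<^sub>F x in sequentially. (4 * real x) powr (2 * sqrt x + 2) < 4 powr real x"
    by real_asymp
  moreover have "\<forall>\<^sub>F x in sequentially. x \<ge> (1::nat)"
    by (rule eventually_ge_at_top)
  ultimately show ?thesis
  proof eventually_elim
    case (elim x)
    show ?case
    proof (rule ccontr)
      assume "\<nexists>p. prime p \<and> x < p \<and> p \<le> 4*x"
      with elim(2) have up: "real ((2*(2*x)) choose (2*x)) \<le> (4 * real x) powr (2 * sqrt x + 1) * 4 ^ x"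
        by (rule central_binomial_le_if_no_prime_between)
      have x4: "1 \<le> 4 * real x" using elim(2) by simp
      have "4 ^ (2*x) / (4 * real x) \<le> real ((2*(2*x)) choose (2*x))"
        using central_binomial_lower_bound[of "2*x"] elim(2) by simp
      hence "4 ^ (2*x) \<le> (4 * real x) * real ((2*(2*x)) choose (2*x))"
        using x4 by (simp add: divide_le_eq mult.commute)
      also have "\<dots> \<le> (4 * real x) * ((4 * real x) powr (2 * sqrt x + 1) * 4 ^ x)"
        using up x4 by (intro mult_left_mono) simp_all
      finally have "4 ^ (2*x) \<le> (4 * real x) powr (2 * sqrt x + 1) * (4 * real x) * 4 ^ x"
        by (simp only: mult_ac)
      also have "(4 * real x) powr (2 * sqrt x + 1) * (4 * real x) = (4 * real x) powr (2 * sqrt x + 2)"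
        using powr_add[of "4 * real x" "2 * sqrt x + 1" 1] x4 by (simp add: add.assoc)
      finally have "(4::real) ^ (2*x) \<le> (4 * real x) powr (2 * sqrt x + 2) * 4 ^ x" .
      hence "(4::real) ^ x * 4 ^ x \<le> (4 * real x) powr (2 * sqrt x + 2) * 4 ^ x"
        by (simp only: mult_2 power_add)
      hence "(4::real) ^ x \<le> (4 * real x) powr (2 * sqrt x + 2)" by simp
      moreover have "(4::real) powr real x = 4 ^ x" by (simp add: powr_realpow)
      ultimately show False using elim(1) by simp
    qed
  qed
qed

lemma prime_between_constant_multiple:
  "\<exists>R>0. \<forall>A::real. A \<ge> 1 \<longrightarrow> (\<exists>p. prime p \<and> A \<le> real p \<and> real p \<le> R * A)"
proof -
  obtain x0 :: nat where x0: "\<And>x. x \<ge> x0 \<Longrightarrow> \<exists>p. prime p \<and> x < p \<and> p \<le> 4*x"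
    using eventually_prime_between unfolding eventually_sequentially by blast
  obtain p0 :: nat where p0: "prime p0" "p0 > x0" using bigger_prime by blast
  \<comment> \<open>below \<open>x0\<close> the single prime \<open>p0\<close> serves\<close>
  have "\<exists>p. prime p \<and> A \<le> real p \<and> real p \<le> max 8 (real p0) * A" if A: "A \<ge> 1" for A :: real
  proof (cases "A \<ge> x0")
    case True
    hence "real x0 \<le> real (nat \<lceil>A\<rceil>)" by linarith
    hence "nat \<lceil>A\<rceil> \<ge> x0" by (simp only: of_nat_le_iff)
    then obtain p where p: "prime p" "nat \<lceil>A\<rceil> < p" "p \<le> 4 * nat \<lceil>A\<rceil>" using x0 by blast
    have ceil: "real (nat \<lceil>A\<rceil>) \<le> A + 1" "A \<le> real (nat \<lceil>A\<rceil>)" using A by linarith+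
    have "real (nat \<lceil>A\<rceil>) < real p" using p(2) by (simp only: of_nat_less_iff)
    moreover have "real p \<le> real (4 * nat \<lceil>A\<rceil>)" using p(3) by (simp only: of_nat_le_iff)
    hence "real p \<le> 4 * real (nat \<lceil>A\<rceil>)" by (simp only: of_nat_mult of_nat_numeral)
    ultimately have "A \<le> real p \<and> real p \<le> 8 * A" using ceil A by linarith
    moreover have "8 * A \<le> max 8 (real p0) * A" using A by (intro mult_right_mono) auto
    ultimately have "A \<le> real p \<and> real p \<le> max 8 (real p0) * A" by linarith
    thus ?thesis using p(1) by blast
  next
    case False
    have "real x0 < real p0" using p0(2) by (simp only: of_nat_less_iff)
    hence "A \<le> real p0" using False by linarith
    moreover have "max 8 (real p0) * 1 \<le> max 8 (real p0) * A"
      by (rule mult_left_mono) (use A in auto)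
    ultimately show ?thesis using p0(1) by auto
  qed
  thus ?thesis by (intro exI[of _ "max 8 (real p0)"]) auto
qed

section \<open>A batch code from lines in \<open>\<bbbF>\<^sub>p\<^sup>3\<close>\<close>

lemma eq_if_int_dvd_diff:
  fixes u v p :: nat
  assumes "int p dvd (int u - int v)" "u < p" "v < p"
  shows "u = v"
proof (rule ccontr)
  assume "u \<noteq> v"
  hence "int u - int v \<noteq> 0" by simp
  from dvd_imp_le_int[OF this assms(1)] have "int p \<le> \<bar>int u - int v\<bar>" by simp
  thus False using assms(2,3) by linarith
qed

lemma prime_dvd_factor_of_distinct_residues:
  fixes p t1 t2 :: nat and w :: int
  assumes "prime p" "t1 < p" "t2 < p" "t1 \<noteq> t2" "int p dvd (int t1 - int t2) * w"
  shows "int p dvd w"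
proof -
  have pi: "prime (int p)" using assms(1) by simp
  have "\<not> int p dvd (int t1 - int t2)" using eq_if_int_dvd_diff assms(2-4) by blast
  thus ?thesis using assms(5) prime_dvd_mult_iff[OF pi] by blast
qed

lemma add_mult_less_mult:
  fixes a p X Y :: nat
  assumes "a < p" "X < Y"
  shows "a + p*X < p*Y"
proof -
  have "p*(X+1) \<le> p*Y" using assms(2) by (intro mult_le_mono2) simp
  thus ?thesis using assms(1) by (simp add: algebra_simps)
qed

lemma odd_card_filter_insert:
  assumes "finite S" "i \<notin> S"
  shows "odd (card {j \<in> insert i S. x j}) = (x i \<noteq> odd (card {j\<in>S. x j}))"
proof (cases "x i")
  case True
  hence "{j \<in> insert i S. x j} = insert i {j\<in>S. x j}" by auto
  moreover have "card (insert i {j\<in>S. x j}) = Suc (card {j\<in>S. x j})" using assms by simp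
  ultimately show ?thesis using True by simp
next
  case False
  hence "{j \<in> insert i S. x j} = {j\<in>S. x j}" by auto
  thus ?thesis using False by simp
qed

locale cubic_lines =
  fixes n k p :: nat
  assumes prime_p: "prime p" and k_pos: "0 < k" and k_le_p: "k \<le> p"
begin

text \<open>Information bit \<open>i\<close> is the point with base-\<open>p\<close> digits \<open>(x, y, z)\<close> in block \<open>i div p\<^sup>3\<close>;
  parity bit \<open>n + line_index c t a b\<close> belongs to the line \<open>{(x, a + t x, b + t\<^sup>2 x)}\<close> of block \<open>c\<close>.\<close>

definition pt_x :: "nat \<Rightarrow> nat" where "pt_x i = i mod p"
definition pt_y :: "nat \<Rightarrow> nat" where "pt_y i = i div p mod p"
definition pt_z :: "nat \<Rightarrow> nat" where "pt_z i = i div p div p mod p"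
definition pt_block :: "nat \<Rightarrow> nat" where "pt_block i = i div p div p div p"

definition line_index :: "nat \<Rightarrow> nat \<Rightarrow> nat \<Rightarrow> nat \<Rightarrow> nat" where
  "line_index c t a b = b + p * (a + p * (t + k * c))"
definition line_b :: "nat \<Rightarrow> nat" where "line_b l = l mod p"
definition line_a :: "nat \<Rightarrow> nat" where "line_a l = l div p mod p"
definition line_slope :: "nat \<Rightarrow> nat" where "line_slope l = l div p div p mod k"
definition line_block :: "nat \<Rightarrow> nat" where "line_block l = l div p div p div k"

definition on_line :: "nat \<Rightarrow> nat \<Rightarrow> bool" where
  "on_line i l \<longleftrightarrow> pt_block i = line_block l \<and>
     int p dvd (int (line_a l) + int (line_slope l) * int (pt_x i) - int (pt_y i)) \<and>
     int p dvd (int (line_b l) + int (line_slope l)^2 * int (pt_x i) - int (pt_z i))"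

definition line_through :: "nat \<Rightarrow> nat \<Rightarrow> nat" where
  "line_through i t = line_index (pt_block i) t
     (nat ((int (pt_y i) - int t * int (pt_x i)) mod int p))
     (nat ((int (pt_z i) - int t^2 * int (pt_x i)) mod int p))"

definition blocks :: nat where "blocks = n div p div p div p + 1"
definition num_lines :: nat where "num_lines = blocks * k * p^2"

definition generator :: "nat \<Rightarrow> nat set" where
  "generator m = (if m < n then {m} else {i. i < n \<and> on_line i (m - n)})"

definition recovery_set :: "nat \<Rightarrow> nat \<Rightarrow> nat set" where
  "recovery_set i t = insert (n + line_through i t) {j. j < n \<and> j \<noteq> i \<and> on_line j (line_through i t)}"

definition compatible :: "nat \<Rightarrow> nat \<Rightarrow> nat \<Rightarrow> nat \<Rightarrow> bool" where
  "compatible i t i' t' \<longleftrightarrow> line_through i t \<noteq> line_through i' t' \<and>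
     (\<forall>m. on_line m (line_through i t) \<and> on_line m (line_through i' t') \<longrightarrow> m = i \<or> m = i')"

lemma p_pos: "p > 0" using prime_p prime_gt_0_nat by blast

lemma line_index_decode:
  assumes "a < p" "b < p" "t < k"
  shows "line_b (line_index c t a b) = b" "line_a (line_index c t a b) = a"
    "line_slope (line_index c t a b) = t" "line_block (line_index c t a b) = c"
  using assms p_pos k_pos by (simp_all add: line_b_def line_a_def line_slope_def line_block_def line_index_def)

lemma point_digits: "i = pt_x i + p * (pt_y i + p * (pt_z i + p * pt_block i))"
proof -
  have e1: "i = i mod p + p * (i div p)" by simp
  have e2: "i div p = i div p mod p + p * (i div p div p)" by simp
  have e3: "i div p div p = i div p div p mod p + p * (i div p div p div p)" by simp
  show ?thesis unfolding pt_x_def pt_y_def pt_z_def pt_block_def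
    using e1 e2 e3 by presburger
qed

lemma point_coords_lt: "pt_x i < p" "pt_y i < p" "pt_z i < p"
  using p_pos by (simp_all add: pt_x_def pt_y_def pt_z_def)

lemma point_eqI:
  "pt_x i = pt_x j \<Longrightarrow> pt_y i = pt_y j \<Longrightarrow> pt_z i = pt_z j \<Longrightarrow> pt_block i = pt_block j \<Longrightarrow> i = j"
  using point_digits[of i] point_digits[of j] by metis

lemma nat_mod_p_lt: "nat (c mod int p) < p"
  using p_pos by (simp add: nat_less_iff)

lemma line_through_decode:
  assumes "t < k"
  shows "line_slope (line_through i t) = t" "line_block (line_through i t) = pt_block i"
    "line_a (line_through i t) = nat ((int (pt_y i) - int t * int (pt_x i)) mod int p)"
    "line_b (line_through i t) = nat ((int (pt_z i) - int t^2 * int (pt_x i)) mod int p)"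
  unfolding line_through_def using line_index_decode[OF nat_mod_p_lt nat_mod_p_lt assms] by simp_all

lemma int_dvd_mod_diff: "int p dvd (c mod int p - c)"
proof -
  have "(c mod int p) mod int p = c mod int p" by simp
  thus ?thesis by (simp only: mod_eq_dvd_iff)
qed

lemma on_line_through:
  assumes "t < k"
  shows "on_line i (line_through i t)"
proof -
  have m1: "int (nat ((int (pt_y i) - int t * int (pt_x i)) mod int p)) = (int (pt_y i) - int t * int (pt_x i)) mod int p"
    using p_pos by simp
  have m2: "int (nat ((int (pt_z i) - int t^2 * int (pt_x i)) mod int p)) = (int (pt_z i) - int t^2 * int (pt_x i)) mod int p"
    using p_pos by simp
  have d1: "int p dvd ((int (pt_y i) - int t * int (pt_x i)) mod int p + int t * int (pt_x i) - int (pt_y i))"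
    using int_dvd_mod_diff[of "int (pt_y i) - int t * int (pt_x i)"] by (simp add: algebra_simps)
  have d2: "int p dvd ((int (pt_z i) - int t^2 * int (pt_x i)) mod int p + int t^2 * int (pt_x i) - int (pt_z i))"
    using int_dvd_mod_diff[of "int (pt_z i) - int t^2 * int (pt_x i)"] by (simp add: algebra_simps)
  show ?thesis unfolding on_line_def line_through_decode[OF assms] m1 m2 using d1 d2 by simp
qed

lemma on_two_lines_eq:
  assumes "line_slope l1 \<noteq> line_slope l2" "on_line j1 l1" "on_line j2 l1" "on_line j1 l2" "on_line j2 l2"
  shows "j1 = j2"
proof -
  define t1 where "t1 = line_slope l1"
  define t2 where "t2 = line_slope l2"
  have ltk: "line_slope l < k" for l unfolding line_slope_def using k_pos by simp
  have t1p: "t1 < p" and t2p: "t2 < p"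
    using ltk[of l1] ltk[of l2] k_le_p unfolding t1_def t2_def by simp_all
  define a1 where "a1 = int (line_a l1)"
  define a2 where "a2 = int (line_a l2)"
  define b1 where "b1 = int (line_b l1)"
  define X1 where "X1 = int (pt_x j1)"
  define Y1 where "Y1 = int (pt_y j1)"
  define Z1 where "Z1 = int (pt_z j1)"
  define X2 where "X2 = int (pt_x j2)"
  define Y2 where "Y2 = int (pt_y j2)"
  define Z2 where "Z2 = int (pt_z j2)"
  have d1: "int p dvd a1 + int t1 * X1 - Y1" using assms(2) by (simp add: on_line_def a1_def t1_def X1_def Y1_def)
  have d2: "int p dvd a1 + int t1 * X2 - Y2" using assms(3) by (simp add: on_line_def a1_def t1_def X2_def Y2_def)
  have d3: "int p dvd a2 + int t2 * X1 - Y1" using assms(4) by (simp add: on_line_def a2_def t2_def X1_def Y1_def)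
  have d4: "int p dvd a2 + int t2 * X2 - Y2" using assms(5) by (simp add: on_line_def a2_def t2_def X2_def Y2_def)
  have e1: "int p dvd b1 + int t1^2 * X1 - Z1" using assms(2) by (simp add: on_line_def b1_def t1_def X1_def Z1_def)
  have e2: "int p dvd b1 + int t1^2 * X2 - Z2" using assms(3) by (simp add: on_line_def b1_def t1_def X2_def Z2_def)
  have "(int t1 - int t2) * (X1 - X2) =
      (a1 + int t1 * X1 - Y1) - (a2 + int t2 * X1 - Y1) - (a1 + int t1 * X2 - Y2) + (a2 + int t2 * X2 - Y2)"
    by algebra
  also have "int p dvd \<dots>" by (rule dvd_add[OF dvd_diff[OF dvd_diff[OF d1 d3] d2] d4])
  finally have "int p dvd (int t1 - int t2) * (X1 - X2)" .
  hence "int p dvd (X1 - X2)"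
    using prime_dvd_factor_of_distinct_residues[OF prime_p t1p t2p] assms(1) unfolding t1_def t2_def by blast
  hence ex: "pt_x j1 = pt_x j2" using eq_if_int_dvd_diff point_coords_lt unfolding X1_def X2_def by blast
  have "Y2 - Y1 = (a1 + int t1 * X1 - Y1) - (a1 + int t1 * X2 - Y2)" using ex unfolding X1_def X2_def by simp
  also have "int p dvd \<dots>" by (rule dvd_diff[OF d1 d2])
  finally have "int p dvd (Y2 - Y1)" .
  hence ey: "pt_y j2 = pt_y j1" using eq_if_int_dvd_diff point_coords_lt unfolding Y1_def Y2_def by blast
  have "Z2 - Z1 = (b1 + int t1^2 * X1 - Z1) - (b1 + int t1^2 * X2 - Z2)" using ex unfolding X1_def X2_def by simp
  also have "int p dvd \<dots>" by (rule dvd_diff[OF e1 e2])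
  finally have "int p dvd (Z2 - Z1)" .
  hence ez: "pt_z j2 = pt_z j1" using eq_if_int_dvd_diff point_coords_lt unfolding Z1_def Z2_def by blast
  have ec: "pt_block j1 = pt_block j2" using assms(2,3) by (simp add: on_line_def)
  show ?thesis using point_eqI[OF ex ey[symmetric] ez[symmetric] ec] .
qed

lemma no_two_lines_through_meet:
  assumes nl: "\<not> on_line i l'" and t: "t1 < k" "t2 < k" "t1 \<noteq> t2"
    and j1: "on_line j1 (line_through i t1)" "on_line j1 l'"
    and j2: "on_line j2 (line_through i t2)" "on_line j2 l'"
  shows False
proof -
  have t1p: "t1 < p" and t2p: "t2 < p" using t k_le_p by simp_all
  define t' where "t' = line_slope l'"
  define a' where "a' = int (line_a l')"
  define b' where "b' = int (line_b l')"
  define X0 where "X0 = int (pt_x i)"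
  define Y0 where "Y0 = int (pt_y i)"
  define Z0 where "Z0 = int (pt_z i)"
  \<comment> \<open>\<open>\<alpha>\<close>, \<open>\<beta>\<close> measure how far \<open>i\<close> is from \<open>l'\<close>; a common point of \<open>l'\<close> and the line through
    \<open>i\<close> of slope \<open>s\<close> forces \<open>\<beta> \<equiv> (s + t') \<alpha>\<close>, so two slopes force \<open>\<alpha> \<equiv> \<beta> \<equiv> 0\<close>\<close>
  define \<alpha> where "\<alpha> = a' + int t' * X0 - Y0"
  define \<beta> where "\<beta> = b' + int t'^2 * X0 - Z0"
  have key: "int p dvd \<beta> - (int s + int t') * \<alpha>"
    if s: "s < k" and js: "on_line j (line_through i s)" "on_line j l'" for s j
  proof -
    define a where "a = int (line_a (line_through i s))"
    define b where "b = int (line_b (line_through i s))"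
    define X where "X = int (pt_x j)"
    define Y where "Y = int (pt_y j)"
    define Z where "Z = int (pt_z j)"
    have oi: "on_line i (line_through i s)" by (rule on_line_through[OF s])
    have c1: "int p dvd a + int s * X0 - Y0" using oi line_through_decode[OF s] by (simp add: on_line_def a_def X0_def Y0_def)
    have c2: "int p dvd b + int s^2 * X0 - Z0" using oi line_through_decode[OF s] by (simp add: on_line_def b_def X0_def Z0_def)
    have c3: "int p dvd a + int s * X - Y" using js(1) line_through_decode[OF s] by (simp add: on_line_def a_def X_def Y_def)
    have c4: "int p dvd b + int s^2 * X - Z" using js(1) line_through_decode[OF s] by (simp add: on_line_def b_def X_def Z_def)
    have c5: "int p dvd a' + int t' * X - Y" using js(2) by (simp add: on_line_def a'_def t'_def X_def Y_def)
    have c6: "int p dvd b' + int t'^2 * X - Z" using js(2) by (simp add: on_line_def b'_def t'_def X_def Z_def)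
    have "\<beta> - (int s + int t') * \<alpha> =
        (int s + int t') * ((a + int s * X - Y) - (a + int s * X0 - Y0) - (a' + int t' * X - Y))
        - ((b + int s^2 * X - Z) - (b + int s^2 * X0 - Z0) - (b' + int t'^2 * X - Z))"
      unfolding \<alpha>_def \<beta>_def by algebra
    also have "int p dvd \<dots>"
      by (rule dvd_diff[OF dvd_mult[OF dvd_diff[OF dvd_diff[OF c3 c1] c5]] dvd_diff[OF dvd_diff[OF c4 c2] c6]])
    finally show ?thesis .
  qed
  have k1: "int p dvd \<beta> - (int t1 + int t') * \<alpha>" by (rule key[OF t(1) j1])
  have k2: "int p dvd \<beta> - (int t2 + int t') * \<alpha>" by (rule key[OF t(2) j2])
  have "(int t1 - int t2) * \<alpha> = (\<beta> - (int t2 + int t') * \<alpha>) - (\<beta> - (int t1 + int t') * \<alpha>)" by algebra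
  also have "int p dvd \<dots>" by (rule dvd_diff[OF k2 k1])
  finally have "int p dvd (int t1 - int t2) * \<alpha>" .
  hence da: "int p dvd \<alpha>" by (rule prime_dvd_factor_of_distinct_residues[OF prime_p t1p t2p t(3)])
  have "\<beta> = (\<beta> - (int t1 + int t') * \<alpha>) + (int t1 + int t') * \<alpha>" by simp
  hence db: "int p dvd \<beta>" using k1 da by (metis dvd_add dvd_mult)
  have "pt_block i = line_block l'"
  proof -
    have "pt_block j1 = line_block (line_through i t1)" using j1(1) by (simp add: on_line_def)
    moreover have "pt_block j1 = line_block l'" using j1(2) by (simp add: on_line_def)
    ultimately show ?thesis using line_through_decode[OF t(1)] by simp
  qed
  hence "on_line i l'"
    using da db unfolding on_line_def \<alpha>_def \<beta>_def a'_def b'_def t'_def X0_def Y0_def Z0_def by simp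
  with nl show False by contradiction
qed

lemma incompatible_slope_unique:
  assumes t': "t' < k" and t1: "t1 < k" and t2: "t2 < k"
    and b1: "\<not> compatible i t1 i' t'" and b2: "\<not> compatible i t2 i' t'"
  shows "t1 = t2"
proof (cases "on_line i (line_through i' t')")
  case True
  have "t = t'" if ts: "t < k" and bt: "\<not> compatible i t i' t'" for t
  proof (rule ccontr)
    assume ne: "t \<noteq> t'"
    have ltne: "line_slope (line_through i t) \<noteq> line_slope (line_through i' t')"
      using line_through_decode(1)[OF ts] line_through_decode(1)[OF t'] ne by simp
    have "line_through i t \<noteq> line_through i' t'"
    proof
      assume "line_through i t = line_through i' t'"
      with ltne show False by simp
    qed
    moreover have "m = i \<or> m = i'" if "on_line m (line_through i t)" "on_line m (line_through i' t')" for m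
      using on_two_lines_eq[OF ltne on_line_through[OF ts] that(1) True that(2)] by simp
    ultimately have "compatible i t i' t'" unfolding compatible_def by blast
    with bt show False by contradiction
  qed
  hence "t1 = t'" "t2 = t'" using b1 b2 t1 t2 by blast+
  thus ?thesis by simp
next
  case False
  have wit: "\<exists>m. on_line m (line_through i t) \<and> on_line m (line_through i' t')"
    if ts: "t < k" and bt: "\<not> compatible i t i' t'" for t
  proof (cases "line_through i t = line_through i' t'")
    case True
    have "on_line i (line_through i t)" by (rule on_line_through[OF ts])
    hence "on_line i (line_through i' t')" using True by simp
    with False show ?thesis by contradiction
  next
    case ne: False
    thus ?thesis using bt unfolding compatible_def by blast
  qed
  show ?thesis
  proof (rule ccontr)
    assume ne: "t1 \<noteq> t2"
    obtain m1 where m1: "on_line m1 (line_through i t1)" "on_line m1 (line_through i' t')" using wit[OF t1 b1] by blast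
    obtain m2 where m2: "on_line m2 (line_through i t2)" "on_line m2 (line_through i' t')" using wit[OF t2 b2] by blast
    show False by (rule no_two_lines_through_meet[OF False t1 t2 ne m1 m2])
  qed
qed

lemma card_incompatible_slopes_le_1:
  assumes "t' < k"
  shows "card {t. t < k \<and> \<not> compatible i t i' t'} \<le> 1"
proof -
  have "\<forall>x\<in>{t. t < k \<and> \<not> compatible i t i' t'}. \<forall>y\<in>{t. t < k \<and> \<not> compatible i t i' t'}. x = y"
    using incompatible_slope_unique[OF assms] by blast
  moreover have "finite {t. t < k \<and> \<not> compatible i t i' t'}" by simp
  ultimately have "card {t. t < k \<and> \<not> compatible i t i' t'} \<le> Suc 0"
    using card_le_Suc0_iff_eq by blast
  thus ?thesis by simp
qed

text \<open>Greedy choice: each earlier request excludes at most one slope, and fewer than \<open>k\<close> have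
  been served.\<close>
lemma compatible_slopes_exist:
  assumes "J \<le> k"
  shows "\<exists>T. \<forall>j<J. T j < k \<and> (\<forall>l<j. compatible (idx j) (T j) (idx l) (T l))"
  using assms
proof (induction J)
  case 0
  show ?case by simp
next
  case (Suc J)
  then obtain T where T: "\<forall>j<J. T j < k \<and> (\<forall>l<j. compatible (idx j) (T j) (idx l) (T l))"
    by auto
  define B where "B = (\<Union>l<J. {t. t < k \<and> \<not> compatible (idx J) t (idx l) (T l)})"
  have "card B \<le> (\<Sum>l<J. card {t. t < k \<and> \<not> compatible (idx J) t (idx l) (T l)})"
    unfolding B_def by (rule card_UN_le) simp
  also have "\<dots> \<le> (\<Sum>l<J. 1)"
    by (rule sum_mono) (use T card_incompatible_slopes_le_1 in auto)
  finally have "card B < k" using Suc.prems by simp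
  have "\<not> {..<k} \<subseteq> B"
  proof
    assume "{..<k} \<subseteq> B"
    hence "card {..<k} \<le> card B" by (intro card_mono) (auto simp: B_def)
    thus False using \<open>card B < k\<close> by simp
  qed
  then obtain t where t: "t < k" "t \<notin> B" by auto
  hence t_compatible: "\<forall>l<J. compatible (idx J) t (idx l) (T l)" unfolding B_def by blast
  have "(T(J := t)) j < k \<and> (\<forall>l<j. compatible (idx j) ((T(J := t)) j) (idx l) ((T(J := t)) l))"
    if "j < Suc J" for j
  proof (cases "j = J")
    case True thus ?thesis using t t_compatible by simp
  next
    case False
    hence "j < J" using that by simp
    thus ?thesis using T by auto
  qed
  thus ?case by blast
qed

lemma line_index_less_num_lines:
  assumes "a < p" "b < p" "t < k" "c < blocks"
  shows "line_index c t a b < num_lines"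
proof -
  have "k * (c + 1) \<le> k * blocks" using assms(4) by (intro mult_le_mono2) simp
  hence "t + k * c < k * blocks" using assms(3) by (simp add: algebra_simps)
  hence "a + p * (t + k * c) < p * (k * blocks)" by (rule add_mult_less_mult[OF assms(1)])
  hence "b + p * (a + p * (t + k * c)) < p * (p * (k * blocks))" by (rule add_mult_less_mult[OF assms(2)])
  thus ?thesis unfolding line_index_def num_lines_def by (simp add: power2_eq_square mult_ac)
qed

lemma line_through_less_num_lines:
  assumes "i < n" "t < k"
  shows "line_through i t < num_lines"
proof -
  have "pt_block i < blocks" unfolding pt_block_def blocks_def using assms(1)
    by (simp add: div_le_mono less_Suc_eq_le)
  thus ?thesis
    unfolding line_through_def by (rule line_index_less_num_lines[OF nat_mod_p_lt nat_mod_p_lt assms(2)])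
qed

lemma recovery_sets_disjoint:
  assumes "compatible i t i' t'"
  shows "recovery_set i t \<inter> recovery_set i' t' = {}"
proof -
  have "x \<notin> recovery_set i' t'" if x: "x \<in> recovery_set i t" for x
  proof
    assume x': "x \<in> recovery_set i' t'"
    show False
    proof (cases "x = n + line_through i t")
      case True
      hence "x \<ge> n" by simp
      hence "x = n + line_through i' t'" using x' unfolding recovery_set_def by auto
      thus False using True assms unfolding compatible_def by simp
    next
      case False
      hence xa: "x < n" "x \<noteq> i" "on_line x (line_through i t)" using x unfolding recovery_set_def by auto
      hence "x \<noteq> n + line_through i' t'" by simp
      hence "x \<noteq> i'" "on_line x (line_through i' t')" using x' unfolding recovery_set_def by auto
      thus False using xa assms unfolding compatible_def by blast
    qed
  qed
  thus ?thesis by blast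
qed

lemma recoverable_recovery_set:
  assumes "i < n" "t < k"
  shows "recoverable_from n generator (recovery_set i t) i"
proof -
  define l where "l = line_through i t"
  define S where "S = {j. j < n \<and> j \<noteq> i \<and> on_line j l}"
  have RS: "recovery_set i t = insert (n + l) S" unfolding recovery_set_def l_def S_def by simp
  have Gl: "generator (n + l) = insert i S"
    using assms(1) on_line_through[OF assms(2), of i] unfolding generator_def S_def l_def by auto
  have finS: "finite S" unfolding S_def by simp
  have iS: "i \<notin> S" unfolding S_def by simp
  show ?thesis unfolding recoverable_from_def
  proof (intro exI[of _ "\<lambda>w. w (n + l) \<noteq> odd (card {j\<in>S. w j})"] allI impI)
    fix x :: "nat \<Rightarrow> bool"
    define w where "w = (\<lambda>m. if m \<in> recovery_set i t then encode generator x m else False)"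
    have w1: "w (n + l) = odd (card {j \<in> insert i S. x j})"
      unfolding w_def RS encode_def Gl by simp
    have w2: "w j = x j" if "j \<in> S" for j
    proof -
      have "j < n" using that unfolding S_def by simp
      hence "generator j = {j}" unfolding generator_def by simp
      hence "encode generator x j = odd (card {m \<in> {j}. x m})" unfolding encode_def by simp
      also have "\<dots> = x j"
      proof -
        have "{m \<in> {j}. x m} = (if x j then {j} else {})" by auto
        thus ?thesis by simp
      qed
      finally show ?thesis unfolding w_def RS using that by simp
    qed
    have ws: "{j\<in>S. w j} = {j\<in>S. x j}" using w2 by auto
    have "(w (n + l) \<noteq> odd (card {j\<in>S. w j})) = x i"
      unfolding w1 odd_card_filter_insert[OF finS iS] ws by blast
    thus "x i = (\<lambda>w. w (n + l) \<noteq> odd (card {j\<in>S. w j}))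
            (\<lambda>m. if m \<in> recovery_set i t then encode generator x m else False)"
      unfolding w_def by simp
  qed
qed

lemma batch_code_generator: "batch_code n (n + num_lines) k generator"
  unfolding batch_code_def
proof (intro conjI allI impI)
  show "linear_code n (n + num_lines) generator" unfolding linear_code_def generator_def by auto
  fix idx :: "nat \<Rightarrow> nat" assume idx: "\<forall>j<k. idx j < n"
  obtain T where T: "\<forall>j<k. T j < k \<and> (\<forall>l<j. compatible (idx j) (T j) (idx l) (T l))"
    using compatible_slopes_exist[OF order_refl] by blast
  show "\<exists>R. (\<forall>j<k. R j \<subseteq> {..<n + num_lines}) \<and> (\<forall>j<k. \<forall>j'<k. j \<noteq> j' \<longrightarrow> R j \<inter> R j' = {}) \<and>
         (\<forall>j<k. recoverable_from n generator (R j) (idx j))"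
  proof (intro exI[of _ "\<lambda>j. recovery_set (idx j) (T j)"] conjI allI impI)
    fix j assume j: "j < k"
    show "recovery_set (idx j) (T j) \<subseteq> {..<n + num_lines}"
      using line_through_less_num_lines[of "idx j" "T j"] idx T j unfolding recovery_set_def by auto
    show "recoverable_from n generator (recovery_set (idx j) (T j)) (idx j)"
      using recoverable_recovery_set idx T j by blast
  next
    fix j j' assume j: "j < k" and j': "j' < k" and ne: "j \<noteq> j'"
    show "recovery_set (idx j) (T j) \<inter> recovery_set (idx j') (T j') = {}"
    proof (cases "j' < j")
      case True thus ?thesis using T j recovery_sets_disjoint by blast
    next
      case False
      hence "j < j'" using ne by simp
      hence "recovery_set (idx j') (T j') \<inter> recovery_set (idx j) (T j) = {}"
        using T j' recovery_sets_disjoint by blast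
      thus ?thesis by blast
    qed
  qed
qed

lemma r_B_le_num_lines: "r_B n k \<le> num_lines"
  unfolding r_B_def by (rule Least_le) (use batch_code_generator in blast)

end

lemma r_B_le_prime:
  assumes "prime p" "0 < k" "k \<le> p"
  shows "r_B n k \<le> (n div p div p div p + 1) * k * p^2"
proof -
  interpret cubic_lines n k p using assms by unfold_locales
  show ?thesis using r_B_le_num_lines unfolding num_lines_def blocks_def .
qed

lemma r_B_zero: "r_B n 0 = 0"
proof -
  have "batch_code n (n + 0) 0 (\<lambda>m. {m})"
    unfolding batch_code_def linear_code_def by auto
  hence "\<exists>G. batch_code n (n + 0) 0 G" by blast
  hence "r_B n 0 \<le> 0" unfolding r_B_def by (rule Least_le)
  thus ?thesis by simp
qed

section \<open>Choosing the prime\<close>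

lemma r_B_le_prime_real:
  assumes "prime p" "0 < k" "k \<le> p"
  shows "real (r_B n k) \<le> real k * real n / real p + real k * real p ^ 2"
proof -
  have p_pos: "real p > 0" using prime_gt_0_nat[OF assms(1)] by simp
  have "n div p div p div p = n div (p*p*p)" by (simp add: div_mult2_eq mult.assoc)
  moreover have "n div (p*p*p) * (p*p*p) \<le> n" by (rule div_times_less_eq_dividend)
  ultimately have "real (n div p div p div p * (p*p*p)) \<le> real n" by (simp only: of_nat_le_iff)
  hence "real (n div p div p div p) * (real p ^ 3) \<le> real n" by (simp add: power3_eq_cube)
  hence blocks: "real (n div p div p div p) \<le> real n / real p ^ 3" using p_pos by (simp add: pos_le_divide_eq)
  have "r_B n k \<le> (n div p div p div p + 1) * k * p^2" by (rule r_B_le_prime[OF assms])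
  hence "real (r_B n k) \<le> real ((n div p div p div p + 1) * k * p^2)" by (simp only: of_nat_le_iff)
  also have "\<dots> = (real (n div p div p div p) + 1) * real k * real p ^ 2"
    by (simp only: of_nat_mult of_nat_add of_nat_1 of_nat_power)
  also have "\<dots> \<le> (real n / real p ^ 3 + 1) * real k * real p ^ 2"
    using blocks by (intro mult_right_mono) auto
  also have "\<dots> = real k * real n / real p + real k * real p ^ 2"
    using p_pos by (simp add: field_simps power3_eq_cube power2_eq_square)
  finally show ?thesis .
qed

text \<open>With \<open>n = u\<^sup>3\<close>, \<open>k = v\<^sup>3\<close> and \<open>v\<^sup>2 \<le> u\<close> (i.e. \<open>k\<^sup>2 \<le> n\<close>), a prime \<open>P\<close> within a constant factor of
  \<open>max k (u / v\<^sup>2)\<close> balances the two terms of the redundancy bound.\<close>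
lemma redundancy_bound_balanced:
  fixes u v R P :: real
  assumes u: "u > 0" and v: "v \<ge> 1" and vu: "v^2 \<le> u" and R: "R > 0"
    and P: "max (v^3) (u / v^2) \<le> P" "P \<le> R * max (v^3) (u / v^2)"
  shows "v^3 * u^3 / P + v^3 * P^2 \<le> (1 + 2 * R^2) * (u^2 * v^5)"
proof -
  define A where "A = max (v^3) (u / v^2)"
  have A1: "A \<ge> 1" unfolding A_def using v by (simp add: le_max_iff_disj one_le_power)
  have P_pos: "P > 0" using A1 P(1) unfolding A_def by linarith
  have "v^3 * u^3 / P \<le> v^3 * u^3 / (u / v^2)"
  proof (rule divide_left_mono)
    show "u / v^2 \<le> P" using P(1) by simp
    show "0 \<le> v^3 * u^3" using u v by simp
    show "0 < P * (u / v^2)" using P_pos u v by simp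
  qed
  also have "v^3 * u^3 / (u / v^2) = u^2 * v^5"
    using u v by (simp add: field_simps power2_eq_square power3_eq_cube eval_nat_numeral)
  finally have first: "v^3 * u^3 / P \<le> u^2 * v^5" .
  have "P^2 \<le> (R * A)^2" using P P_pos unfolding A_def by (intro power_mono) auto
  also have "(R*A)^2 = R^2 * A^2" by (simp add: power_mult_distrib)
  also have "A^2 \<le> (v^3)^2 + (u/v^2)^2" unfolding A_def by (simp add: max_def)
  finally have P2: "P^2 \<le> R^2 * ((v^3)^2 + (u/v^2)^2)" using R by (simp add: mult_left_mono)
  have t1: "v^3 * (v^3)^2 \<le> u^2 * v^5"
  proof -
    have "(v^2)^2 \<le> u^2" using vu v by (intro power_mono) auto
    moreover have "(v^2)^2 = v^4" by (metis power_mult num_double numeral_times_numeral)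
    ultimately have "v^4 \<le> u^2" by simp
    hence "v^4 * v^5 \<le> u^2 * v^5" using v by (intro mult_right_mono) auto
    thus ?thesis by (simp add: power_add[symmetric] power_mult[symmetric])
  qed
  have t2: "v^3 * (u/v^2)^2 \<le> u^2 * v^5"
  proof -
    have "v^3 * (u/v^2)^2 = u^2 / v" using v by (simp add: field_simps power2_eq_square power3_eq_cube)
    also have "\<dots> \<le> u^2" using v u by (simp add: divide_le_eq mult_le_cancel_left1)
    also have "\<dots> \<le> u^2 * v^5"
      using mult_left_mono[OF one_le_power[OF v, of 5], of "u^2"] by simp
    finally show ?thesis .
  qed
  have "v^3 * P^2 \<le> v^3 * (R^2 * ((v^3)^2 + (u/v^2)^2))"
    using P2 v by (intro mult_left_mono) auto
  also have "\<dots> = R^2 * (v^3 * (v^3)^2 + v^3 * (u/v^2)^2)" by (simp add: algebra_simps)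
  also have "\<dots> \<le> R^2 * (u^2 * v^5 + u^2 * v^5)" using t1 t2 by (intro mult_left_mono) auto
  finally have "v^3 * P^2 \<le> 2 * R^2 * (u^2 * v^5)" by simp
  with first show ?thesis by (simp add: algebra_simps)
qed

lemma r_B_le_uniform:
  "\<exists>C. \<forall>n k. 1 \<le> k \<longrightarrow> real k \<le> sqrt (real n) \<longrightarrow>
     real (r_B n k) \<le> C * (real n powr (2/3) * real k powr (5/3))"
proof -
  obtain R :: real where R: "R > 0"
    and prime_between: "\<And>A. A \<ge> 1 \<Longrightarrow> \<exists>p. prime p \<and> A \<le> real p \<and> real p \<le> R * A"
    using prime_between_constant_multiple by blast
  have "real (r_B n k) \<le> (1 + 2 * R^2) * (real n powr (2/3) * real k powr (5/3))"
    if k1: "1 \<le> k" and kn: "real k \<le> sqrt (real n)" for n k :: nat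
  proof -
    have n1: "real n \<ge> 1" using k1 kn by (metis of_nat_1 of_nat_le_iff order_trans real_sqrt_ge_1_iff)
    define u where "u = real n powr (1/3)"
    define v where "v = real k powr (1/3)"
    have u0: "u > 0" unfolding u_def using n1 by simp
    have v1: "v \<ge> 1" unfolding v_def by (rule ge_one_powr_ge_zero) (use k1 in simp_all)
    have nu: "real n = u ^ 3" unfolding u_def using n1 by (simp add: powr_powr flip: powr_realpow)
    have kv: "real k = v ^ 3" unfolding v_def using k1 by (simp add: powr_powr flip: powr_realpow)
    have nu2: "real n powr (2/3) = u ^ 2" unfolding u_def using n1 by (simp add: powr_powr flip: powr_realpow)
    have kv5: "real k powr (5/3) = v ^ 5" unfolding v_def using k1 by (simp add: powr_powr flip: powr_realpow)
    have vu: "v^2 \<le> u"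
    proof -
      have "real k ^ 2 \<le> sqrt (real n) ^ 2" by (rule power_mono[OF kn]) simp
      also have "sqrt (real n) ^ 2 = real n" by simp
      finally have "(v^3)^2 \<le> u^3" unfolding nu kv .
      moreover have "(v^2)^3 = (v^3)^2" by (metis power_mult mult.commute)
      ultimately have "(v^2)^3 \<le> u^3" by simp
      thus ?thesis using u0 power_mono_iff[of "v^2" u 3] by simp
    qed
    have "max (v^3) (u / v^2) \<ge> 1" using v1 by (simp add: le_max_iff_disj one_le_power)
    then obtain p where p: "prime p" "max (v^3) (u / v^2) \<le> real p" "real p \<le> R * max (v^3) (u / v^2)"
      using prime_between by blast
    have "k \<le> p" using p(2) kv by (simp flip: of_nat_le_iff)
    hence "real (r_B n k) \<le> real k * real n / real p + real k * real p ^ 2"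
      using r_B_le_prime_real[OF p(1)] k1 by simp
    also have "\<dots> \<le> (1 + 2 * R^2) * (u^2 * v^5)"
      unfolding nu kv by (rule redundancy_bound_balanced[OF u0 v1 vu R p(2,3)])
    finally show ?thesis unfolding nu2 kv5 .
  qed
  thus ?thesis by blast
qed

lemma r_B_bigo:
  fixes k :: "nat \<Rightarrow> nat"
  assumes "(\<lambda>n. real (k n)) \<in> o(\<lambda>n. sqrt (real n))"
  shows "(\<lambda>n. real (r_B n (k n))) \<in> O(\<lambda>n. real n powr (2/3) * real (k n) powr (5/3))"
proof -
  obtain C where C: "\<And>n k. 1 \<le> k \<Longrightarrow> real k \<le> sqrt (real n) \<Longrightarrow>
      real (r_B n k) \<le> C * (real n powr (2/3) * real k powr (5/3))"
    using r_B_le_uniform by blast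
  have "\<forall>\<^sub>F n in sequentially. real (k n) \<le> sqrt (real n)"
    using landau_o.smallD[OF assms zero_less_one] by eventually_elim simp
  hence "\<forall>\<^sub>F n in sequentially. norm (real (r_B n (k n))) \<le>
           C * norm (real n powr (2/3) * real (k n) powr (5/3))"
  proof eventually_elim
    case (elim n)
    show ?case
    proof (cases "k n = 0")
      case True
      thus ?thesis using r_B_zero by simp
    next
      case False
      thus ?thesis using C[of "k n" n] elim by simp
    qed
  qed
  thus ?thesis by (rule bigoI)
qed

lemma r_B_bigo_powr:
  fixes \<epsilon> :: real
  assumes "0 < \<epsilon>" "\<epsilon> < 1/2"
  shows "(\<lambda>n. real (r_B n (nat \<lfloor>real n powr \<epsilon>\<rfloor>))) \<in> O(\<lambda>n. real n powr (2/3 + 5 * \<epsilon> / 3))"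
proof -
  define k where "k = (\<lambda>n::nat. nat \<lfloor>real n powr \<epsilon>\<rfloor>)"
  have k_le: "real (k n) \<le> real n powr \<epsilon>" for n
  proof -
    have "real (k n) = of_int \<lfloor>real n powr \<epsilon>\<rfloor>" unfolding k_def by simp
    also have "\<dots> \<le> real n powr \<epsilon>" by simp
    finally show ?thesis .
  qed
  have "(\<lambda>n. real (k n)) \<in> O(\<lambda>n::nat. real n powr \<epsilon>)"
    by (rule bigoI[where c = 1]) (use k_le in simp)
  moreover have "(\<lambda>n::nat. real n powr \<epsilon>) \<in> o(\<lambda>n. sqrt (real n))"
    using assms by real_asymp
  ultimately have "(\<lambda>n. real (k n)) \<in> o(\<lambda>n. sqrt (real n))"
    by (rule landau_o.big_small_trans)
  hence "(\<lambda>n. real (r_B n (k n))) \<in> O(\<lambda>n. real n powr (2/3) * real (k n) powr (5/3))"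
    by (rule r_B_bigo)
  moreover have "(\<lambda>n. real n powr (2/3) * real (k n) powr (5/3)) \<in> O(\<lambda>n. real n powr (2/3 + 5 * \<epsilon> / 3))"
  proof (rule bigoI[where c = 1], rule always_eventually, intro allI)
    fix n :: nat
    have "real (k n) powr (5/3) \<le> (real n powr \<epsilon>) powr (5/3)"
      by (rule powr_mono2) (use k_le in auto)
    also have "\<dots> = real n powr (5 * \<epsilon> / 3)" by (simp add: powr_powr mult.commute)
    finally have "real n powr (2/3) * real (k n) powr (5/3) \<le> real n powr (2/3) * real n powr (5 * \<epsilon> / 3)"
      by (intro mult_left_mono) auto
    also have "\<dots> = real n powr (2/3 + 5 * \<epsilon> / 3)" by (simp add: powr_add)
    finally show "norm (real n powr (2/3) * real (k n) powr (5/3)) \<le> 1 * norm (real n powr (2/3 + 5 * \<epsilon> / 3))"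
      by simp
  qed
  ultimately show ?thesis unfolding k_def by (rule landau_o.big_trans)
qed

theorem corollary1:
  shows "(\<forall>k :: nat \<Rightarrow> nat.
            (\<lambda>n. real (k n)) \<in> o(\<lambda>n. sqrt (real n)) \<longrightarrow>
            (\<lambda>n. real (r_B n (k n))) \<in> O(\<lambda>n. real n powr (2/3) * real (k n) powr (5/3)))
       \<and> (\<forall>\<epsilon> :: real. 0 < \<epsilon> \<and> \<epsilon> < 1/2 \<longrightarrow>
            (\<lambda>n. real (r_B n (nat \<lfloor>real n powr \<epsilon>\<rfloor>))) \<in> O(\<lambda>n. real n powr (2/3 + 5 * \<epsilon> / 3)))"
  using r_B_bigo r_B_bigo_powr by blast

end
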